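(* Fix $k>0$ and suppose $a_r(v,x)>0$ for all $v\in\mathbb{R}^m_{>0}$ and $x\in\mathbb{R}^n_{>0}$. Then for every $c_0$ such that $\omega_{c_0}\cap\mathbb{R}^n_{>0}\neq\emptyset$ and $\omega_{c_0}$ contains no boundary equilibria (i.e. $Nv(k,x)\ne0$ for every $x\in\omega_{c_0}$ having some zero coordinate), the equation $f(k,x)=Nv(k,x)=0$ has exactly one solution $x\in\omega_{c_0}$ (and it is positive).
   Context: Mass-action network with species $A_1,\dots,A_n$, reactions $\sum_{i}\alpha_{ij}A_i\xrightarrow{k_j}\sum_i\beta_{ij}A_i$ ($j=1,\dots,m$), nonnegative integer coefficients, rate constants $k>0$, rate functions $v_j(k,x)=k_j\prod_i x_i^{\alpha_{ij}}$, stoichiometric matrix $N_{ij}=\beta_{ij}-\alpha_{ij}$ of rank $r$, model $\dot x=Nv(k,x)=:f(k,x)$. Standing assumption: some $\lambda\in\mathbb{R}^n_{>0}$ satisfies $\lambda^TN=0$. $W\in\mathbb{R}^{n\times(n-r)}$ is full rank with columns spanning $\ker(N^T)$; $\omega_{c_0}=\{x\ge0: W^Tx=c_0\}$. $J(v,x)$ is the $n\times n$ matrix with $J_{il}=\sum_j N_{ij}\alpha_{lj}v_j/x_l$; it is assumed that $\mathrm{im}(J(v,x))=\mathrm{im}(N)$; $a_r(v,x)$ is the sum of all principal minors of order $r$ of $-J(v,x)$. *)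

theory Defs
  imports "HOL-Analysis.Analysis"
begin

text \<open>Species are indexed by a finite type 'n, reactions by a
finite type 'm. alpha$i$j and beta$i$j are the (nonnegative integer) stoichiometric
coefficients of species i in reactant / product complex of reaction j.\<close>

definition stoich :: "nat^'m^'n \<Rightarrow> nat^'m^'n \<Rightarrow> real^'m^'n" where
  "stoich alpha beta = (\<chi> i j. real (beta$i$j) - real (alpha$i$j))"

definition rate :: "nat^'m^'n \<Rightarrow> real^'m \<Rightarrow> real^'n \<Rightarrow> real^'m" where
  "rate alpha k x = (\<chi> j. k$j * (\<Prod>i\<in>UNIV. (x$i) ^ (alpha$i$j)))"

definition mafield :: "nat^'m^'n \<Rightarrow> nat^'m^'n \<Rightarrow> real^'m \<Rightarrow> real^'n \<Rightarrow> real^'n" where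
  "mafield alpha beta k x = stoich alpha beta *v rate alpha k x"

definition Jmat :: "nat^'m^'n \<Rightarrow> nat^'m^'n \<Rightarrow> real^'m \<Rightarrow> real^'n \<Rightarrow> real^'n^'n" where
  "Jmat alpha beta v x = (\<chi> i l. \<Sum>j\<in>UNIV. stoich alpha beta $i$j * real (alpha$l$j) * v$j / x$l)"

definition principal_minor :: "real^'n^'n \<Rightarrow> 'n set \<Rightarrow> real" where
  "principal_minor A S = (\<Sum>p | p permutes S. of_int (sign p) * (\<Prod>i\<in>S. A$i$(p i)))"

definition sum_principal_minors :: "real^'n^'n \<Rightarrow> nat \<Rightarrow> real" where
  "sum_principal_minors A r = (\<Sum>S | card S = r. principal_minor A S)"

definition a_coef :: "nat^'m^'n \<Rightarrow> nat^'m^'n \<Rightarrow> real^'m \<Rightarrow> real^'n \<Rightarrow> real" where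
  "a_coef alpha beta v x = sum_principal_minors (- Jmat alpha beta v x) (rank (stoich alpha beta))"

definition omega :: "real^'p^'n \<Rightarrow> real^'p \<Rightarrow> (real^'n) set" where
  "omega W c0 = {x. (\<forall>i. x$i \<ge> 0) \<and> transpose W *v x = c0}"

end

theory Submission
  imports Defs
begin

text \<open>If \<open>x \<noteq> y\<close> were positive equilibria in one class, divided differences of \<open>exp\<close> and
  \<open>ln\<close> give positive \<open>\<kappa>, \<mu>\<close> with \<open>J(\<kappa>,\<mu>) (x - y) = f x - f y = 0\<close>, while
  \<open>x - y \<in> ker W\<^sup>T = im N = im J(\<kappa>,\<mu>)\<close>. A nonzero vector in \<open>im J \<inter> ker J\<close> makes
  \<open>det (t I - J)\<close> vanish to order \<open>n - r + 1\<close> at \<open>t = 0\<close> (write \<open>J\<close> in a basis extending one of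
  \<open>ker J\<close> by a preimage of that vector), so its coefficient \<open>a\<^sub>r(\<kappa>,\<mu>)\<close> of \<open>t\<^sup>n\<^sup>-\<^sup>r\<close>
  vanishes, contradicting \<open>a\<^sub>r > 0\<close>.
  For existence, a positive conservation law makes the class compact; \<open>f\<close> is tangent to it and
  points inward where a coordinate vanishes, so Brouwer's theorem applied to
  \<open>x \<mapsto> closest_point \<omega> (x + f x)\<close> yields an equilibrium, positive by the absence of boundary
  equilibria.\<close>

section \<open>Principal minors and the characteristic polynomial\<close>

lemma prod_diagonal_indicator:
  fixes p :: "'n::finite \<Rightarrow> 'n" and t :: real
  shows "(\<Prod>i\<in>UNIV - S. if i = p i then t else 0) =
         (if \<forall>i\<in>UNIV - S. p i = i then t ^ (CARD('n) - card S) else 0)"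
proof (cases "\<forall>i\<in>UNIV - S. p i = i")
  case True
  then have "(\<Prod>i\<in>UNIV - S. if i = p i then t else 0) = (\<Prod>i\<in>UNIV - S. t)"
    by (intro prod.cong) auto
  also have "\<dots> = t ^ (CARD('n) - card S)"
    by (simp add: card_Diff_subset)
  finally show ?thesis
    using True by simp
next
  case False
  then obtain i where "i \<in> UNIV - S" "p i \<noteq> i"
    by blast
  then have "(\<Prod>i\<in>UNIV - S. if i = p i then t else 0) = 0"
    by (intro prod_zero) force+
  then show ?thesis
    by (simp only: if_not_P [OF False])
qed

lemma det_mat_plus_eq_sum_principal_minors:
  fixes A :: "real^'n^'n"
  shows "det (mat t + A) = (\<Sum>S\<in>UNIV. t ^ (CARD('n) - card S) * principal_minor A S)"
proof -
  let ?P = "{p. p permutes (UNIV::'n set)}"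
  let ?d = "\<lambda>S p. if \<forall>i\<in>UNIV - S. p i = i then t ^ (CARD('n) - card S) else 0"
  have entry: "(mat t + A)$i$(p i) = A$i$(p i) + (if i = p i then t else 0)" for i p
    by (simp add: mat_def)
  have "det (mat t + A) =
      (\<Sum>p\<in>?P. \<Sum>S\<in>UNIV. of_int (sign p) * ((\<Prod>i\<in>S. A$i$(p i)) * ?d S p))"
    unfolding det_def entry
    by (simp add: prod_add prod_diagonal_indicator sum_distrib_left)
  also have "\<dots> = (\<Sum>S\<in>UNIV. \<Sum>p\<in>?P. of_int (sign p) * ((\<Prod>i\<in>S. A$i$(p i)) * ?d S p))"
    by (rule sum.swap)
  also have "\<dots> = (\<Sum>S\<in>UNIV. t ^ (CARD('n) - card S) * principal_minor A S)"
  proof (rule sum.cong [OF refl])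
    fix S :: "'n set"
    have restrict: "{p \<in> ?P. \<forall>i\<in>UNIV - S. p i = i} = {p. p permutes S}"
      by (auto intro: permutes_superset permutes_subset permutes_not_in)
    have "(\<Sum>p\<in>?P. of_int (sign p) * ((\<Prod>i\<in>S. A$i$(p i)) * ?d S p)) =
        (\<Sum>p\<in>?P. if \<forall>i\<in>UNIV - S. p i = i
           then t ^ (CARD('n) - card S) * (of_int (sign p) * (\<Prod>i\<in>S. A$i$(p i))) else 0)"
      by (intro sum.cong) auto
    also have "\<dots> = (\<Sum>p\<in>{p \<in> ?P. \<forall>i\<in>UNIV - S. p i = i}.
           t ^ (CARD('n) - card S) * (of_int (sign p) * (\<Prod>i\<in>S. A$i$(p i))))"
      by (rule sum.inter_filter [symmetric]) simp
    finally show "(\<Sum>p\<in>?P. of_int (sign p) * ((\<Prod>i\<in>S. A$i$(p i)) * ?d S p)) =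
        t ^ (CARD('n) - card S) * principal_minor A S"
      unfolding restrict principal_minor_def by (simp add: sum_distrib_left)
  qed
  finally show ?thesis .
qed

lemma det_mat_plus_eq_poly:
  fixes A :: "real^'n^'n"
  shows "det (mat t + A) =
    (\<Sum>j\<le>CARD('n). sum_principal_minors A (CARD('n) - j) * t ^ j)"
proof -
  let ?n = "CARD('n)"
  have card_le: "card S \<le> ?n" for S :: "'n set"
    by (rule card_mono) auto
  have level: "(\<Sum>S\<in>{S \<in> UNIV. ?n - card S = j}. t ^ (?n - card S) * principal_minor A S) =
      sum_principal_minors A (?n - j) * t ^ j" if "j \<le> ?n" for j
  proof -
    have iff: "?n - card S = j \<longleftrightarrow> card S = ?n - j" for S :: "'n set"
      using that card_le [of S] by arith
    have "{S \<in> UNIV. ?n - card S = j} = {S :: 'n set. card S = ?n - j}"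
      by (simp only: iff UNIV_I simp_thms)
    then show ?thesis
      unfolding sum_principal_minors_def sum_distrib_right
      using that by (simp add: mult.commute)
  qed
  have "det (mat t + A) = (\<Sum>S\<in>UNIV. t ^ (?n - card S) * principal_minor A S)"
    by (rule det_mat_plus_eq_sum_principal_minors)
  also have "\<dots> = (\<Sum>j\<le>?n. \<Sum>S\<in>{S \<in> UNIV. ?n - card S = j}.
                     t ^ (?n - card S) * principal_minor A S)"
    by (rule sum.group [symmetric]) auto
  also have "\<dots> = (\<Sum>j\<le>?n. sum_principal_minors A (?n - j) * t ^ j)"
    by (intro sum.cong refl level) simp
  finally show ?thesis .
qed

lemma mat_matrix_mul: "mat t ** (B::real^'n^'m) = t *\<^sub>R B"
  unfolding vec_eq_iff matrix_matrix_mult_def mat_def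
  by (simp add: if_distrib [of "\<lambda>x. x * _"] cong: if_cong)

lemma det_mat_plus_similar:
  fixes A P P' :: "real^'n^'n"
  assumes inverse: "P' ** P = mat 1"
  shows "det (mat t + P' ** A ** P) = det (mat t + A)"
proof -
  have "det P' * det P = 1"
    using det_mul [of P' P] inverse by simp
  have "P' ** (mat t + A) ** P = P' ** mat t ** P + P' ** A ** P"
    by (simp add: matrix_add_ldistrib vec_eq_iff matrix_matrix_mult_def sum.distrib algebra_simps)
  also have "P' ** mat t ** P = t *\<^sub>R (P' ** P)"
    by (simp add: mat_matrix_mul matrix_scalar_ac scalar_matrix_assoc flip: matrix_mul_assoc)
  also have "\<dots> = mat t"
    by (simp add: inverse vec_eq_iff mat_def)
  finally have "det (mat t + P' ** A ** P) = det P' * det (mat t + A) * det P"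
    by (metis det_mul)
  then show ?thesis
    using \<open>det P' * det P = 1\<close> by (simp add: algebra_simps)
qed

lemma eq_0_if_abs_le_linear:
  fixes a K :: real
  assumes "\<And>t. 0 < t \<Longrightarrow> t \<le> 1 \<Longrightarrow> \<bar>a\<bar> \<le> K * t"
  shows "a = 0"
proof (rule ccontr)
  assume "a \<noteq> 0"
  then have a: "\<bar>a\<bar> > 0"
    by simp
  have K: "K \<ge> 0"
    using assms [of 1] a by simp
  define t where "t = min 1 (\<bar>a\<bar> / (K + 1))"
  have t: "0 < t" "t \<le> 1"
    using a K by (auto simp: t_def)
  have "K * t \<le> K * (\<bar>a\<bar> / (K + 1))"
    using K by (intro mult_left_mono) (auto simp: t_def)
  also have "\<dots> < \<bar>a\<bar>"
    using a K by (simp add: field_simps)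
  finally show False
    using assms [OF t] by simp
qed

lemma coeff_eq_0_if_abs_le_power:
  fixes c :: "nat \<Rightarrow> real"
  assumes bound: "\<And>t. 0 < t \<Longrightarrow> t \<le> 1 \<Longrightarrow> \<bar>\<Sum>i\<le>n. c i * t ^ i\<bar> \<le> C * t ^ m"
  shows "j < m \<Longrightarrow> j \<le> n \<Longrightarrow> c j = 0"
proof (induction j rule: less_induct)
  case (less j)
  define S where "S = (\<Sum>i\<le>n. \<bar>c i\<bar>)"
  have "C \<ge> 0"
    using bound [of 1] by (metis abs_ge_zero order_trans power_one mult_1_right order_refl zero_less_one)
  show ?case
  proof (rule eq_0_if_abs_le_linear)
    fix t :: real
    assume t: "0 < t" "t \<le> 1"
    have "{..n} = {..<j} \<union> {j} \<union> {j<..n}"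
      using less.prems by auto
    then have "(\<Sum>i\<le>n. c i * t ^ i) =
        (\<Sum>i<j. c i * t ^ i) + c j * t ^ j + (\<Sum>i\<in>{j<..n}. c i * t ^ i)"
      by (simp only:) (subst sum.union_disjoint, auto)+
    moreover have "(\<Sum>i<j. c i * t ^ i) = 0"
      using less.IH less.prems by (intro sum.neutral) auto
    ultimately have split: "c j * t ^ j = (\<Sum>i\<le>n. c i * t ^ i) - (\<Sum>i\<in>{j<..n}. c i * t ^ i)"
      by simp
    have "t ^ i \<le> t ^ Suc j" if "j < i" for i
      using t that by (intro power_decreasing) auto
    then have "\<bar>\<Sum>i\<in>{j<..n}. c i * t ^ i\<bar> \<le> (\<Sum>i\<in>{j<..n}. \<bar>c i\<bar> * t ^ Suc j)"
      using t by (intro order_trans [OF sum_abs] sum_mono)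
        (auto simp: abs_mult intro!: mult_left_mono simp del: power_Suc)
    also have "\<dots> \<le> S * t ^ Suc j"
      unfolding S_def sum_distrib_right [symmetric]
      using t by (intro mult_right_mono sum_mono2) auto
    finally have tail: "\<bar>\<Sum>i\<in>{j<..n}. c i * t ^ i\<bar> \<le> S * t ^ Suc j" .
    have "C * t ^ m \<le> C * t ^ Suc j"
      using \<open>C \<ge> 0\<close> t less.prems by (intro mult_left_mono power_decreasing) auto
    then have "\<bar>c j\<bar> * t ^ j \<le> ((C + S) * t) * t ^ j"
      using bound [OF t] tail split by (simp add: abs_mult algebra_simps)
    then show "\<bar>c j\<bar> \<le> (C + S) * t"
      using t by simp
  qed
qed

lemma permutes_fixes_if_prod_nonzero:
  fixes X :: "real^'n^'n"
  assumes p: "p permutes UNIV" and nonzero: "\<And>i. X$i$(p i) \<noteq> 0"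
    and colZ: "\<And>i j. j \<in> Z \<Longrightarrow> i \<noteq> j \<Longrightarrow> X$i$j = 0"
    and col0: "\<And>i. i \<notin> Z \<Longrightarrow> i \<noteq> i0 \<Longrightarrow> X$i$i0 = 0"
    and i: "i \<in> insert i0 Z"
  shows "p i = i"
proof -
  have p_inv: "p (inv p j) = j" for j
    using p by (simp add: permutes_inverses(1))
  have fixZ: "p j = j" if "j \<in> Z" for j
    using colZ [OF that, of "inv p j"] nonzero [of "inv p j"] p_inv [of j] by metis
  have "inv p i0 \<in> insert i0 Z"
    using col0 [of "inv p i0"] nonzero [of "inv p i0"] p_inv [of i0] by (metis insertCI)
  then have "p i0 = i0"
    using fixZ p_inv [of i0] by (metis insertE)
  then show ?thesis
    using i fixZ by blast
qed

lemma abs_prod_permutes_le: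
  fixes X :: "real^'n^'n"
  assumes p: "p permutes UNIV"
    and colZ: "\<And>i j. j \<in> Z \<Longrightarrow> i \<noteq> j \<Longrightarrow> X$i$j = 0"
    and col0: "\<And>i. i \<notin> Z \<Longrightarrow> i \<noteq> i0 \<Longrightarrow> X$i$i0 = 0"
    and diag: "\<And>i. i \<in> insert i0 Z \<Longrightarrow> X$i$i = t"
    and bound: "\<And>i j. \<bar>X$i$j\<bar> \<le> B" and "0 \<le> t" "1 \<le> B"
  shows "\<bar>\<Prod>i\<in>UNIV. X$i$(p i)\<bar> \<le> t ^ card (insert i0 Z) * B ^ CARD('n)"
proof (cases "\<exists>i. X$i$(p i) = 0")
  case True
  then have "(\<Prod>i\<in>UNIV. X$i$(p i)) = 0"
    by (auto intro: prod_zero)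
  moreover have "0 \<le> t ^ card (insert i0 Z) * B ^ CARD('n)"
    using \<open>0 \<le> t\<close> \<open>1 \<le> B\<close> by simp
  ultimately show ?thesis
    by (simp only: abs_zero)
next
  case False
  let ?T = "insert i0 Z"
  have "p i = i" if "i \<in> ?T" for i
    by (rule permutes_fixes_if_prod_nonzero [of p X Z i0]) (use p False colZ col0 that in auto)
  then have "\<bar>\<Prod>i\<in>UNIV. X$i$(p i)\<bar> \<le> (\<Prod>i\<in>UNIV. if i \<in> ?T then t else B)"
    unfolding abs_prod
    by (intro prod_mono) (use bound diag \<open>0 \<le> t\<close> in auto)
  also have "\<dots> = t ^ card ?T * B ^ card (UNIV - ?T)"
    by (simp add: prod.If_cases Int_absorb1 flip: Compl_eq_Diff_UNIV insert_compr)
  also have "\<dots> \<le> t ^ card ?T * B ^ CARD('n)"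
    using \<open>0 \<le> t\<close> \<open>1 \<le> B\<close> by (intro mult_left_mono power_increasing card_mono) auto
  finally show ?thesis .
qed

lemma abs_det_mat_plus_le_power:
  fixes M :: "real^'n^'n"
  assumes colZ: "\<And>i j. j \<in> Z \<Longrightarrow> M$i$j = 0"
    and col0: "\<And>i. i \<notin> Z \<Longrightarrow> M$i$i0 = 0" and i0: "i0 \<notin> Z"
  obtains C where "\<And>t. 0 < t \<Longrightarrow> t \<le> 1 \<Longrightarrow> \<bar>det (mat t + M)\<bar> \<le> C * t ^ (card Z + 1)"
proof
  let ?P = "{p. p permutes (UNIV::'n set)}"
  define B where "B = 1 + (\<Sum>i\<in>UNIV. \<Sum>j\<in>UNIV. \<bar>M$i$j\<bar>)"
  fix t :: real
  assume t: "0 < t" "t \<le> 1"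
  define X where "X = mat t + M"
  have X: "X$i$j = (if i = j then t else 0) + M$i$j" for i j
    by (simp add: X_def mat_def)
  have "\<bar>M$i$j\<bar> \<le> (\<Sum>j\<in>UNIV. \<bar>M$i$j\<bar>)" for i j
    by (rule member_le_sum) auto
  also have "(\<Sum>j\<in>UNIV. \<bar>M$i$j\<bar>) \<le> (\<Sum>i\<in>UNIV. \<Sum>j\<in>UNIV. \<bar>M$i$j\<bar>)" for i
    by (rule member_le_sum [of i UNIV "\<lambda>i. \<Sum>j\<in>UNIV. \<bar>M$i$j\<bar>"]) (auto intro: sum_nonneg)
  finally have M_le: "\<bar>M$i$j\<bar> \<le> B - 1" for i j
    by (simp add: B_def)
  then have "B \<ge> 1"
    by (meson abs_ge_zero diff_ge_0_iff_ge order_trans)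
  have X_le: "\<bar>X$i$j\<bar> \<le> B" for i j
    using M_le [of i j] t by (auto simp: X)
  have X_diag: "X$i$i = t" if "i \<in> insert i0 Z" for i
    using that i0 by (auto simp: X colZ col0)
  have term_le: "\<bar>\<Prod>i\<in>UNIV. X$i$(p i)\<bar> \<le> t ^ (card Z + 1) * B ^ CARD('n)"
    if "p permutes UNIV" for p
  proof -
    have "\<bar>\<Prod>i\<in>UNIV. X$i$(p i)\<bar> \<le> t ^ card (insert i0 Z) * B ^ CARD('n)"
      by (rule abs_prod_permutes_le [OF that])
        (use X_le X_diag t \<open>B \<ge> 1\<close> in \<open>auto simp: X colZ col0\<close>)
    then show ?thesis
      using i0 by simp
  qed
  have "\<bar>det X\<bar> \<le> (\<Sum>p\<in>?P. \<bar>of_int (sign p) * (\<Prod>i\<in>UNIV. X$i$(p i))\<bar>)"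
    unfolding det_def by (rule sum_abs)
  also have "\<dots> \<le> (\<Sum>p\<in>?P. t ^ (card Z + 1) * B ^ CARD('n))"
    by (rule sum_mono) (use term_le in \<open>auto simp: abs_mult sign_def simp del: power_Suc\<close>)
  finally show "\<bar>det (mat t + M)\<bar> \<le> (card ?P * B ^ CARD('n)) * t ^ (card Z + 1)"
    by (simp add: X_def algebra_simps)
qed

section \<open>Matrices whose range meets their kernel\<close>

lemma card_le_dim_range_plus_dim_kernel:
  fixes A :: "real^'n^'m"
  shows "CARD('n) \<le> dim (range ((*v) A)) + dim {x. A *v x = 0}"
proof -
  define V where "V = {x. A *v x = 0}"
  define Q where "Q = orthogonal_comp V"
  have "subspace V"
    unfolding V_def by (rule real_vector.linear_subspace_kernel [OF matrix_vector_mul_linear])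
  have "UNIV \<subseteq> span (V \<union> Q)"
  proof
    fix x :: "real^'n"
    have "x \<in> V + Q"
      using subspace_sum_orthogonal_comp [OF \<open>subspace V\<close>] by (simp add: Q_def)
    then show "x \<in> span (V \<union> Q)"
      by (auto simp: set_plus_def intro: span_add span_base)
  qed
  then have "CARD('n) \<le> dim (V \<union> Q)"
    using dim_subset [of UNIV "span (V \<union> Q)"] by (simp add: DIM_cart)
  also have "\<dots> = dim V + dim Q"
    by (rule dim_orthogonal_sum) (auto simp: Q_def orthogonal_comp_def orthogonal_def)
  also have "dim Q = dim ((*v) A ` Q)"
  proof (rule dim_image_eq [OF matrix_vector_mul_linear, symmetric], rule inj_onI)
    fix x y
    assume "x \<in> span Q" "y \<in> span Q" "A *v x = A *v y"
    then have "x - y \<in> Q"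
      using subspace_orthogonal_comp [of V] by (metis Q_def span_diff span_eq_iff)
    moreover have "x - y \<in> V"
      using \<open>A *v x = A *v y\<close> by (simp add: V_def matrix_vector_mult_diff_distrib)
    ultimately have "x - y \<in> V \<inter> Q"
      by blast
    then show "x = y"
      using orthogonal_Int_0 [OF \<open>subspace V\<close>] by (simp add: Q_def)
  qed
  also have "\<dots> \<le> dim (range ((*v) A))"
    by (rule dim_subset) auto
  finally show ?thesis
    by (simp add: V_def add.commute)
qed

lemma independent_extends_to_enumerated_basis:
  fixes S :: "(real^'n) set"
  assumes "independent S"
  obtains g :: "'n \<Rightarrow> real^'n" where "inj g" "independent (range g)" "S \<subseteq> range g"
proof -
  obtain B where B: "S \<subseteq> B" "independent B" "UNIV \<subseteq> span B"
    using maximal_independent_subset_extend [of S UNIV] assms by auto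
  then have "finite B" "card B = CARD('n)"
    using basis_card_eq_dim [of B UNIV] by (auto simp: finiteI_independent DIM_cart)
  then obtain g :: "'n \<Rightarrow> real^'n" where "bij_betw g UNIV B"
    using finite_same_card_bij [of "UNIV::'n set" B] by auto
  then show ?thesis
    using B that by (auto simp: bij_betw_def)
qed

lemma basis_matrix_mult: "(\<chi> i j. g j $ i) *v c = (\<Sum>j\<in>UNIV. c$j *\<^sub>R (g j :: real^'m))"
  by (simp add: matrix_mult_sum column_def scalar_mult_eq_scaleR)

lemma basis_matrix_left_invertible:
  fixes g :: "'n \<Rightarrow> real^'n"
  assumes "inj g" "independent (range g)"
  shows "\<exists>P'. P' ** (\<chi> i j. g j $ i) = mat 1"
  unfolding matrix_left_invertible_ker
proof (intro allI impI)
  fix c :: "real^'n"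
  assume "(\<chi> i j. g j $ i) *v c = 0"
  then have "(\<Sum>j\<in>UNIV. c$j *\<^sub>R g j) = 0"
    by (simp add: basis_matrix_mult)
  then have sum0: "(\<Sum>v\<in>range g. c $ inv g v *\<^sub>R v) = 0"
    using assms(1) by (simp add: sum.reindex)
  have "\<forall>u. (\<Sum>v\<in>range g. u v *\<^sub>R v) = 0 \<longrightarrow> (\<forall>v\<in>range g. u v = 0)"
    using assms(2) by (simp add: eucl.independent_explicit)
  from this [rule_format, OF sum0] have "\<forall>v\<in>range g. c $ inv g v = 0"
    by blast
  then show "c = 0"
    using assms(1) by (simp add: vec_eq_iff)
qed

lemma span_image_basis_matrix:
  fixes g :: "'n::finite \<Rightarrow> real^'m"
  assumes "inj g" "u \<in> span (g ` Z)"
  obtains c where "(\<chi> i j. g j $ i) *v c = u" "\<And>j. j \<notin> Z \<Longrightarrow> c$j = 0"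
proof -
  obtain a where "u = (\<Sum>v\<in>g ` Z. a v *\<^sub>R v)"
    using assms(2) span_finite [of "g ` Z"] by auto
  also have "\<dots> = (\<Sum>j\<in>Z. a (g j) *\<^sub>R g j)"
    using assms(1) by (simp add: sum.reindex inj_on_subset)
  also have "\<dots> = (\<Sum>j\<in>UNIV. (\<chi> j. if j \<in> Z then a (g j) else 0) $ j *\<^sub>R g j)"
    by (simp add: if_distrib [of "\<lambda>x. x *\<^sub>R _"] sum.If_cases cong: if_cong)
  finally show ?thesis
    by (intro that [of "\<chi> j. if j \<in> Z then a (g j) else 0"]) (simp_all add: basis_matrix_mult)
qed

lemma matrix_mul_triple_entry:
  "(P' ** A ** P)$i$j = (P' *v (A *v column j (P :: real^'n^'m)))$i"
proof -
  have "(P' ** A ** P)$i$j = ((P' ** A ** P) *v axis j 1)$i"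
    by (simp add: matrix_vector_mult_basis column_def)
  also have "\<dots> = (P' *v (A *v (P *v axis j 1)))$i"
    by (simp add: matrix_vector_mul_assoc matrix_mul_assoc)
  finally show ?thesis
    by (simp add: matrix_vector_mult_basis)
qed

lemma kernel_basis_extension:
  fixes A :: "real^'n^'n"
  assumes "A *v w \<noteq> 0" "A *v (A *v w) = 0"
  obtains g :: "'n \<Rightarrow> real^'n" and Z i0 where "inj g" "independent (range g)"
    and "\<And>j. j \<in> Z \<Longrightarrow> A *v g j = 0" and "A *v g i0 \<in> span (g ` Z)" and "i0 \<notin> Z"
    and "card Z = dim {x. A *v x = 0}"
proof -
  define V where "V = {x. A *v x = 0}"
  have "subspace V"
    unfolding V_def by (rule real_vector.linear_subspace_kernel [OF matrix_vector_mul_linear])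
  obtain K where K: "K \<subseteq> V" "independent K" "V \<subseteq> span K" "card K = dim V"
    by (rule basis_exists)
  have "w \<notin> span K"
    using span_minimal [OF K(1) \<open>subspace V\<close>] assms(1) by (auto simp: V_def)
  then obtain g :: "'n \<Rightarrow> real^'n"
    where g: "inj g" "independent (range g)" "insert w K \<subseteq> range g"
    using independent_extends_to_enumerated_basis [OF independent_insertI [OF _ K(2)]] by blast
  define Z where "Z = {j. g j \<in> K}"
  obtain i0 where i0: "g i0 = w"
    using g(3) by auto
  have "g ` Z = K"
    using g(3) by (auto simp: Z_def)
  show ?thesis
  proof (rule that [OF g(1,2)])
    show "A *v g j = 0" if "j \<in> Z" for j
      using that K(1) by (auto simp: Z_def V_def)
    show "A *v g i0 \<in> span (g ` Z)"
      using assms(2) K(3) i0 \<open>g ` Z = K\<close> by (auto simp: V_def)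
    show "i0 \<notin> Z"
      using \<open>w \<notin> span K\<close> i0 by (auto simp: Z_def span_base)
    show "card Z = dim {x. A *v x = 0}"
      using card_image [OF inj_on_subset [OF g(1)], of Z] \<open>g ` Z = K\<close> K(4) by (simp add: V_def)
  qed
qed

text \<open>\<open>M\<close> is \<open>A\<close> written in the basis of \<open>kernel_basis_extension\<close>.\<close>

lemma similar_matrix_with_null_columns:
  fixes A :: "real^'n^'n"
  assumes u: "u \<in> range ((*v) A)" "u \<noteq> 0" "A *v u = 0"
  obtains M :: "real^'n^'n" and Z i0 where "\<And>t. det (mat t + M) = det (mat t + A)"
    and "\<And>i j. j \<in> Z \<Longrightarrow> M$i$j = 0" and "\<And>i. i \<notin> Z \<Longrightarrow> M$i$i0 = 0" and "i0 \<notin> Z"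
    and "CARD('n) \<le> rank A + card Z"
proof -
  obtain w where w: "A *v w = u"
    using u(1) by auto
  obtain g :: "'n \<Rightarrow> real^'n" and Z i0 where g: "inj g" "independent (range g)"
    and kernel: "\<And>j. j \<in> Z \<Longrightarrow> A *v g j = 0" and "A *v g i0 \<in> span (g ` Z)" "i0 \<notin> Z"
    and card_Z: "card Z = dim {x. A *v x = 0}"
    by (rule kernel_basis_extension [of A w]) (use u w in auto)
  define P where "P = (\<chi> i j. g j $ i)"
  obtain P' where P': "P' ** P = mat 1"
    using basis_matrix_left_invertible [OF g] by (auto simp: P_def)
  have entry: "(P' ** A ** P)$i$j = (P' *v (A *v g j))$i" for i j
    by (simp add: matrix_mul_triple_entry column_def P_def)
  obtain c where c: "P *v c = A *v g i0" "\<And>j. j \<notin> Z \<Longrightarrow> c$j = 0"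
    using span_image_basis_matrix [OF g(1) \<open>A *v g i0 \<in> span (g ` Z)\<close>] unfolding P_def by blast
  show ?thesis
  proof (rule that [of "P' ** A ** P" Z i0])
    show "det (mat t + P' ** A ** P) = det (mat t + A)" for t
      by (rule det_mat_plus_similar [OF P'])
    show "(P' ** A ** P)$i$j = 0" if "j \<in> Z" for i j
      using that by (simp add: entry kernel)
    have "P' *v (A *v g i0) = c"
      using c(1) P' by (metis matrix_vector_mul_assoc matrix_vector_mul_lid)
    then show "(P' ** A ** P)$i$i0 = 0" if "i \<notin> Z" for i
      using that c(2) by (simp add: entry)
    show "i0 \<notin> Z"
      by fact
    show "CARD('n) \<le> rank A + card Z"
      using card_le_dim_range_plus_dim_kernel [of A] card_Z by (simp add: rank_dim_range)
  qed
qed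

text \<open>By similarity and \<open>abs_det_mat_plus_le_power\<close>, \<open>det (t I + A) = O(t\<^sup>n\<^sup>-\<^sup>r\<^sup>+\<^sup>1)\<close> as
  \<open>t \<rightarrow> 0\<close>, so its coefficient of \<open>t\<^sup>n\<^sup>-\<^sup>r\<close> vanishes.\<close>

lemma sum_principal_minors_rank_eq_0:
  fixes A :: "real^'n^'n"
  assumes "u \<in> range ((*v) A)" "u \<noteq> 0" "A *v u = 0"
  shows "sum_principal_minors A (rank A) = 0"
proof -
  let ?n = "CARD('n)"
  obtain M :: "real^'n^'n" and Z i0 where similar: "\<And>t. det (mat t + M) = det (mat t + A)"
    and colZ: "\<And>i j. j \<in> Z \<Longrightarrow> M$i$j = 0" and col0: "\<And>i. i \<notin> Z \<Longrightarrow> M$i$i0 = 0"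
    and "i0 \<notin> Z" and rank_le: "?n \<le> rank A + card Z"
    using similar_matrix_with_null_columns [OF assms] by metis
  obtain C where C: "\<And>t. 0 < t \<Longrightarrow> t \<le> 1 \<Longrightarrow> \<bar>det (mat t + M)\<bar> \<le> C * t ^ (card Z + 1)"
    using abs_det_mat_plus_le_power [OF colZ col0 \<open>i0 \<notin> Z\<close>] by blast
  have "\<bar>det (mat 1 + M)\<bar> \<le> C"
    using C [of 1] by simp
  then have "C \<ge> 0"
    by (meson abs_ge_zero order_trans)
  have "\<bar>\<Sum>j\<le>?n. sum_principal_minors A (?n - j) * t ^ j\<bar> \<le> C * t ^ (?n - rank A + 1)"
    if t: "0 < t" "t \<le> 1" for t
  proof -
    have "\<bar>\<Sum>j\<le>?n. sum_principal_minors A (?n - j) * t ^ j\<bar> = \<bar>det (mat t + M)\<bar>"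
      unfolding similar by (simp only: det_mat_plus_eq_poly)
    also have "\<dots> \<le> C * t ^ (card Z + 1)"
      by (rule C [OF t])
    also have "\<dots> \<le> C * t ^ (?n - rank A + 1)"
      using rank_le t \<open>C \<ge> 0\<close> by (intro mult_left_mono power_decreasing) auto
    finally show ?thesis .
  qed
  then have "sum_principal_minors A (?n - (?n - rank A)) = 0"
    by (rule coeff_eq_0_if_abs_le_power [where c = "\<lambda>j. sum_principal_minors A (?n - j)"]) auto
  moreover have "rank A \<le> ?n"
    using rank_bound [of A] by simp
  ultimately show ?thesis
    by simp
qed

section \<open>Orthogonal complements and the stoichiometric subspace\<close>

lemma orthogonal_comp_span: "(span S)\<^sup>\<bottom> = S\<^sup>\<bottom>"
proof
  show "(span S)\<^sup>\<bottom> \<subseteq> S\<^sup>\<bottom>"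
    by (rule orthogonal_comp_anti_mono [OF span_superset])
  show "S\<^sup>\<bottom> \<subseteq> (span S)\<^sup>\<bottom>"
  proof
    fix x
    assume "x \<in> S\<^sup>\<bottom>"
    then have "S \<subseteq> {y. orthogonal x y}"
      by (auto simp: orthogonal_comp_def orthogonal_commute)
    then have "span S \<subseteq> {y. orthogonal x y}"
      by (rule span_minimal [OF _ subspace_orthogonal_to_vector])
    then show "x \<in> (span S)\<^sup>\<bottom>"
      by (auto simp: orthogonal_comp_def orthogonal_commute)
  qed
qed

lemma kernel_transpose_eq_orthogonal_comp_columns:
  fixes W :: "real^'p^'n"
  shows "{u. transpose W *v u = 0} = (columns W)\<^sup>\<bottom>"
proof -
  have "(transpose W *v u)$i = column i W \<bullet> u" for u i
    by (simp add: column_def inner_vec_def matrix_vector_mult_def transpose_def mult.commute)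
  then have "transpose W *v u = 0 \<longleftrightarrow> (\<forall>i. column i W \<bullet> u = 0)" for u
    by (simp only: vec_eq_iff zero_index)
  then show ?thesis
    by (auto simp: orthogonal_comp_def orthogonal_def columns_def)
qed

lemma kernel_transpose_eq_range:
  fixes N :: "real^'m^'n" and W :: "real^'p^'n"
  assumes "span (columns W) = {y. transpose N *v y = 0}"
  shows "{u. transpose W *v u = 0} = range ((*v) N)"
proof -
  have "adjoint ((*v) (transpose N)) = (*v) N"
    using adjoint_matrix [of "transpose N"] by (simp only: transpose_transpose)
  then have kernel: "{y. transpose N *v y = 0} = (range ((*v) N))\<^sup>\<bottom>"
    using ker_orthogonal_comp_adjoint [OF matrix_vector_mul_linear, of "transpose N"]
    by (simp only: vimage_def singleton_iff)
  have "subspace (range ((*v) N))"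
    using real_vector.linear_subspace_image [OF matrix_vector_mul_linear subspace_UNIV] by simp
  have "{u. transpose W *v u = 0} = (columns W)\<^sup>\<bottom>"
    by (rule kernel_transpose_eq_orthogonal_comp_columns)
  also have "\<dots> = (span (columns W))\<^sup>\<bottom>"
    by (rule orthogonal_comp_span [symmetric])
  also have "\<dots> = (range ((*v) N))\<^sup>\<bottom>\<^sup>\<bottom>"
    by (simp only: assms kernel)
  also have "\<dots> = range ((*v) N)"
    by (rule orthogonal_comp_self) fact
  finally show ?thesis .
qed

section \<open>Uniqueness of positive equilibria in a compatibility class\<close>

lemma neg_matrix_vector_mult: "(- A) *v x = - (A *v (x :: 'a::ring_1^'n))"
  by (simp add: vec_eq_iff matrix_vector_mult_def sum_negf)

lemma matrix_vector_mult_neg: "A *v (- x) = - (A *v (x :: 'a::ring_1^'n))"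
  by (simp add: vec_eq_iff matrix_vector_mult_def sum_negf)

lemma range_neg_matrix_vector_mult: "range ((*v) (- A)) = range ((*v) (A :: 'a::ring_1^'n^'m))"
  by (auto simp: image_iff neg_matrix_vector_mult) (metis matrix_vector_mult_neg minus_minus)+

lemma ln_divided_difference:
  fixes a b :: real
  assumes "0 < a" "0 < b"
  shows "\<exists>\<mu>>0. a - b = \<mu> * (ln a - ln b)"
proof (cases "a = b")
  case True
  then show ?thesis
    using assms by auto
next
  case False
  then have "(a - b) / (ln a - ln b) > 0"
    using assms by (cases "a < b") (auto intro: divide_neg_neg divide_pos_pos)
  moreover have "ln a \<noteq> ln b"
    using assms False by simp
  ultimately show ?thesis
    by (intro exI [of _ "(a - b) / (ln a - ln b)"]) simp
qed

lemma exp_divided_difference: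
  fixes a b :: real
  shows "\<exists>\<kappa>>0. exp a - exp b = \<kappa> * (a - b)"
proof (cases "a = b")
  case True
  then show ?thesis
    by (intro exI [of _ 1]) simp
next
  case False
  then have "(exp a - exp b) / (a - b) > 0"
    by (cases "a < b") (auto intro: divide_neg_neg divide_pos_pos)
  then show ?thesis
    using False by (intro exI [of _ "(exp a - exp b) / (a - b)"]) simp
qed

lemma rate_eq_exp:
  assumes "\<forall>i. 0 < x$i"
  shows "rate alpha k x $ j = k$j * exp (\<Sum>i\<in>UNIV. real (alpha$i$j) * ln (x$i))"
  using assms by (simp add: rate_def exp_sum exp_of_nat_mult)

text \<open>\<open>\<mu>\<close> collects the divided differences of \<open>ln\<close> in each species, \<open>\<kappa>\<close> those of \<open>exp\<close>
  (scaled by \<open>k\<close>) in each reaction.\<close>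

lemma mafield_diff_eq_Jmat:
  fixes alpha beta :: "nat^'m^'n"
  assumes x: "\<forall>i. 0 < x$i" and y: "\<forall>i. 0 < y$i" and k: "\<forall>j. 0 < k$j"
  obtains kap mu where "\<forall>j. 0 < kap$j" "\<forall>l. 0 < mu$l"
    "mafield alpha beta k x - mafield alpha beta k y = Jmat alpha beta kap mu *v (x - y)"
proof -
  define s where "s w j = (\<Sum>i\<in>UNIV. real (alpha$i$j) * ln (w$i))" for w :: "real^'n" and j
  define N where "N = stoich alpha beta"
  have "\<forall>l. \<exists>\<mu>. 0 < \<mu> \<and> x$l - y$l = \<mu> * (ln (x$l) - ln (y$l))"
    using ln_divided_difference x y by blast
  from choice [OF this] obtain m
    where m: "\<And>l. 0 < m l" "\<And>l. x$l - y$l = m l * (ln (x$l) - ln (y$l))"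
    by blast
  have "\<forall>j. \<exists>\<kappa>. 0 < \<kappa> \<and> exp (s x j) - exp (s y j) = \<kappa> * (s x j - s y j)"
    using exp_divided_difference by blast
  from choice [OF this] obtain e
    where e: "\<And>j. 0 < e j" "\<And>j. exp (s x j) - exp (s y j) = e j * (s x j - s y j)"
    by blast
  define kap :: "real^'m" where "kap = (\<chi> j. k$j * e j)"
  define mu :: "real^'n" where "mu = (\<chi> l. m l)"
  have rate_diff: "rate alpha k x $ j - rate alpha k y $ j = kap$j * (s x j - s y j)" for j
    using e(2) [of j] by (simp add: rate_eq_exp x y kap_def s_def right_diff_distrib [symmetric])
  have "(Jmat alpha beta kap mu *v (x - y))$i = (mafield alpha beta k x - mafield alpha beta k y)$i"
    for i
  proof -
    have "(Jmat alpha beta kap mu *v (x - y))$i = (\<Sum>l\<in>UNIV.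
        (\<Sum>j\<in>UNIV. N$i$j * real (alpha$l$j) * kap$j / m l) * (m l * (ln (x$l) - ln (y$l))))"
      by (simp add: matrix_vector_mult_def Jmat_def N_def mu_def m(2))
    also have "\<dots> =
        (\<Sum>l\<in>UNIV. \<Sum>j\<in>UNIV. N$i$j * kap$j * (real (alpha$l$j) * (ln (x$l) - ln (y$l))))"
      unfolding sum_distrib_right
      by (intro sum.cong refl) (use m(1) in \<open>simp add: field_simps less_imp_neq [symmetric]\<close>)
    also have "\<dots> = (\<Sum>j\<in>UNIV. N$i$j * (kap$j * (s x j - s y j)))"
      by (subst sum.swap) (simp add: s_def sum_distrib_left sum_subtractf algebra_simps)
    also have "\<dots> = (\<Sum>j\<in>UNIV. N$i$j * (rate alpha k x $ j - rate alpha k y $ j))"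
      by (simp only: rate_diff)
    also have "\<dots> = (mafield alpha beta k x - mafield alpha beta k y)$i"
      by (simp add: mafield_def N_def matrix_vector_mult_def right_diff_distrib sum_subtractf)
    finally show ?thesis .
  qed
  then show ?thesis
    using that [of kap mu] k e(1) m(1) by (simp add: vec_eq_iff kap_def mu_def)
qed

lemma mafield_inj_on_positive_class:
  fixes alpha beta :: "nat^'m^'n" and W :: "real^'p^'n"
  assumes W_span: "span (columns W) = {y. transpose (stoich alpha beta) *v y = 0}"
    and J_im: "\<And>v x. (\<forall>j. v$j > 0) \<Longrightarrow> (\<forall>i. x$i > 0) \<Longrightarrow>
                 range (\<lambda>y. Jmat alpha beta v x *v y) = range (\<lambda>y. stoich alpha beta *v y)"
    and a_pos: "\<And>v x. (\<forall>j. v$j > 0) \<Longrightarrow> (\<forall>i. x$i > 0) \<Longrightarrow> a_coef alpha beta v x > 0"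
    and k: "\<forall>j. 0 < k$j" and x: "\<forall>i. 0 < x$i" and y: "\<forall>i. 0 < y$i"
    and same_class: "transpose W *v x = transpose W *v y"
    and same_field: "mafield alpha beta k x = mafield alpha beta k y"
  shows "x = y"
proof (rule ccontr)
  assume "x \<noteq> y"
  obtain kap mu where kap: "\<forall>j. 0 < kap$j" and mu: "\<forall>l. 0 < mu$l"
    and diff: "mafield alpha beta k x - mafield alpha beta k y = Jmat alpha beta kap mu *v (x - y)"
    using mafield_diff_eq_Jmat [OF x y k] by blast
  define J where "J = Jmat alpha beta kap mu"
  have "x - y \<in> range ((*v) (stoich alpha beta))"
    using same_class kernel_transpose_eq_range [OF W_span]
    by (auto simp: matrix_vector_mult_diff_distrib simp del: transpose_matrix_vector)
  then have "x - y \<in> range ((*v) (- J))"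
    using J_im [OF kap mu] by (simp add: J_def range_neg_matrix_vector_mult)
  moreover have "(- J) *v (x - y) = 0"
    using diff same_field by (simp add: J_def neg_matrix_vector_mult)
  ultimately have "sum_principal_minors (- J) (rank (- J)) = 0"
    using \<open>x \<noteq> y\<close> by (intro sum_principal_minors_rank_eq_0) auto
  moreover have "rank (- J) = rank (stoich alpha beta)"
    using J_im [OF kap mu] by (simp add: rank_dim_range range_neg_matrix_vector_mult J_def)
  ultimately have "a_coef alpha beta kap mu = 0"
    by (simp add: a_coef_def J_def)
  then show False
    using a_pos [OF kap mu] by simp
qed

section \<open>Existence of an equilibrium in a compatibility class\<close>

text \<open>At a fixed point \<open>x\<close> of \<open>x \<mapsto> closest_point S (x + F x)\<close> the vector \<open>F x\<close> makes an
  obtuse angle with every \<open>y - x\<close>, \<open>y \<in> S\<close>; taking \<open>y = x + t F x\<close> forces \<open>F x = 0\<close>.\<close>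

lemma brouwer_zero_of_inward_field:
  fixes F :: "'a::euclidean_space \<Rightarrow> 'a"
  assumes S: "compact S" "convex S" "S \<noteq> {}" and contF: "continuous_on S F"
    and inward: "\<And>x. x \<in> S \<Longrightarrow> \<exists>t>0. x + t *\<^sub>R F x \<in> S"
  obtains x where "x \<in> S" "F x = 0"
proof -
  have "closed S"
    using S(1) by (rule compact_imp_closed)
  define \<phi> where "\<phi> x = closest_point S (x + F x)" for x
  have "continuous_on S (\<lambda>x. x + F x)"
    by (intro continuous_intros contF)
  then have "continuous_on S \<phi>"
    unfolding \<phi>_def
    using continuous_on_compose2 [OF continuous_on_closest_point [OF S(2) \<open>closed S\<close> S(3)]]
    by blast
  moreover have "\<phi> \<in> S \<rightarrow> S"
    unfolding \<phi>_def using closest_point_in_set [OF \<open>closed S\<close> S(3)] by blast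
  ultimately obtain x where "x \<in> S" "\<phi> x = x"
    using brouwer [OF S] by blast
  then have closest: "\<forall>z\<in>S. dist (x + F x) x \<le> dist (x + F x) z"
    using closest_point_le [OF \<open>closed S\<close>] unfolding \<phi>_def by metis
  obtain t where "t > 0" "x + t *\<^sub>R F x \<in> S"
    using inward [OF \<open>x \<in> S\<close>] by blast
  then have "((x + F x) - x) \<bullet> ((x + t *\<^sub>R F x) - x) \<le> 0"
    by (intro any_closest_point_dot [OF S(2) \<open>closed S\<close> \<open>x \<in> S\<close> _ closest])
  then have "t * (F x \<bullet> F x) \<le> 0"
    by simp
  then have "F x \<bullet> F x \<le> 0"
    using \<open>t > 0\<close> by (simp add: mult_le_0_iff)
  then have "F x = 0"
    by (metis inner_ge_zero inner_eq_zero_iff order_antisym)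
  then show ?thesis
    using \<open>x \<in> S\<close> that by blast
qed

lemma closed_omega: "closed (omega (W :: real^'p^'n) c0)"
proof -
  have "omega W c0 = (\<Inter>i. {x. x$i \<ge> 0}) \<inter> {x. transpose W *v x = c0}"
    by (auto simp: omega_def)
  moreover have "closed {x::real^'n. transpose W *v x = c0}"
    by (intro closed_Collect_eq continuous_intros linear_continuous_on
        matrix_vector_mul_bounded_linear)
  moreover have "closed {x::real^'n. x$i \<ge> 0}" for i
    by (intro closed_Collect_le continuous_intros)
  ultimately show ?thesis
    by (auto intro!: closed_Int closed_INT)
qed

lemma convex_omega: "convex (omega (W :: real^'p^'n) c0)"
proof (rule convexI)
  fix x y :: "real^'n" and a b :: real
  assume xy: "x \<in> omega W c0" "y \<in> omega W c0" and ab: "0 \<le> a" "0 \<le> b" "a + b = 1"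
  have "transpose W *v (a *\<^sub>R x + b *\<^sub>R y) = (a + b) *\<^sub>R c0"
    using xy by (simp add: omega_def matrix_vector_right_distrib matrix_vector_mult_scaleR
        scaleR_add_left del: transpose_matrix_vector)
  then show "a *\<^sub>R x + b *\<^sub>R y \<in> omega W c0"
    using xy ab by (auto simp: omega_def simp del: transpose_matrix_vector)
qed

text \<open>A positive conservation law \<open>\<lambda>\<close> is constant on each class, which confines it to a box.\<close>

lemma bounded_omega:
  assumes lam: "lam \<in> span (columns W)" "\<forall>i. 0 < lam$i"
  shows "bounded (omega W c0)"
proof (cases "omega W c0 = {}")
  case False
  then obtain x0 where x0: "x0 \<in> omega W c0"
    by blast
  have "omega W c0 \<subseteq> cbox 0 (\<chi> i. (lam \<bullet> x0) / lam$i)"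
  proof
    fix x
    assume x: "x \<in> omega W c0"
    then have "x - x0 \<in> (span (columns W))\<^sup>\<bottom>"
      using x0 kernel_transpose_eq_orthogonal_comp_columns [of W]
      by (auto simp: omega_def orthogonal_comp_span matrix_vector_mult_diff_distrib
          simp del: transpose_matrix_vector)
    then have "lam \<bullet> x = lam \<bullet> x0"
      using lam(1) by (simp add: orthogonal_comp_def orthogonal_def inner_diff_right)
    moreover have "lam$i * x$i \<le> lam \<bullet> x" for i
      unfolding inner_vec_def inner_real_def
      by (rule member_le_sum) (use x lam(2) in \<open>auto simp: omega_def less_imp_le\<close>)
    ultimately show "x \<in> cbox 0 (\<chi> i. (lam \<bullet> x0) / lam$i)"
      using x lam(2) by (auto simp: omega_def mem_box_cart field_simps mult.commute)
  qed
  then show ?thesis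
    by (rule bounded_subset [OF bounded_cbox])
qed simp

lemma mafield_nonneg_at_zero_coordinate:
  assumes x: "\<forall>i. 0 \<le> x$i" and xi: "x$i = 0" and k: "\<forall>j. 0 < k$j"
  shows "mafield alpha beta k x $ i \<ge> 0"
proof -
  have "stoich alpha beta $i$j * rate alpha k x $ j \<ge> 0" for j
  proof (cases "alpha$i$j = 0")
    case True
    then have "stoich alpha beta $i$j \<ge> 0"
      by (simp add: stoich_def)
    moreover have "rate alpha k x $ j \<ge> 0"
      unfolding rate_def vec_lambda_beta
      by (intro mult_nonneg_nonneg prod_nonneg zero_le_power) (use x k in \<open>auto intro: less_imp_le\<close>)
    ultimately show ?thesis
      by simp
  next
    case False
    then have "rate alpha k x $ j = 0"
      unfolding rate_def using xi by (auto intro!: prod_zero)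
    then show ?thesis
      by simp
  qed
  then show ?thesis
    by (simp add: mafield_def matrix_vector_mult_def sum_nonneg)
qed

lemma transpose_mult_mafield_eq_0:
  assumes W_span: "span (columns W) = {y. transpose (stoich alpha beta) *v y = 0}"
  shows "transpose W *v mafield alpha beta k x = 0"
proof -
  have "column i W v* stoich alpha beta = 0" for i
    using W_span span_base [of "column i W" "columns W"] by (auto simp: columns_def)
  then have "column i W \<bullet> mafield alpha beta k x = 0" for i
    by (simp add: mafield_def flip: dot_lmul_matrix)
  then show ?thesis
    using kernel_transpose_eq_orthogonal_comp_columns [of W]
    by (auto simp: orthogonal_comp_def orthogonal_def columns_def simp del: transpose_matrix_vector)
qed

lemma mafield_points_into_omega:
  fixes W :: "real^'p^'n"
  assumes W_span: "span (columns W) = {y. transpose (stoich alpha beta) *v y = 0}"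
    and k: "\<forall>j. 0 < k$j" and x: "x \<in> omega W c0"
  shows "\<exists>t>0. x + t *\<^sub>R mafield alpha beta k x \<in> omega W c0"
proof -
  define F where "F = mafield alpha beta k x"
  define t where "t = Min (insert 1 ((\<lambda>i. x$i / (\<bar>F$i\<bar> + 1)) ` {i. 0 < x$i}))"
  have "t > 0"
    unfolding t_def by (subst Min_gr_iff) (auto intro!: divide_pos_pos add_nonneg_pos)
  have t_le: "t \<le> x$i / (\<bar>F$i\<bar> + 1)" if "0 < x$i" for i
    unfolding t_def using that by (intro Min_le) auto
  have "0 \<le> x$i + t * F$i" for i
  proof (cases "0 < x$i")
    case True
    have "t * \<bar>F$i\<bar> \<le> t * (\<bar>F$i\<bar> + 1)"
      using \<open>t > 0\<close> by simp
    also have "\<dots> \<le> x$i"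
      using t_le [OF True] by (simp add: field_simps)
    finally have "t * \<bar>F$i\<bar> \<le> x$i" .
    moreover have "- (t * F$i) \<le> t * \<bar>F$i\<bar>"
      using \<open>t > 0\<close> by (metis abs_ge_minus_self abs_mult abs_of_pos)
    ultimately show ?thesis
      by linarith
  next
    case False
    moreover have "0 \<le> x$i"
      using x by (simp add: omega_def)
    ultimately have "x$i = 0"
      by simp
    then have "F$i \<ge> 0"
      using x k by (auto simp: F_def omega_def intro: mafield_nonneg_at_zero_coordinate)
    then show ?thesis
      using \<open>x$i = 0\<close> \<open>t > 0\<close> by simp
  qed
  moreover have "transpose W *v (x + t *\<^sub>R F) = c0"
    using x transpose_mult_mafield_eq_0 [OF W_span]
    by (simp add: F_def omega_def matrix_vector_right_distrib matrix_vector_mult_scaleR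
        del: transpose_matrix_vector)
  ultimately show ?thesis
    using \<open>t > 0\<close> by (auto simp: F_def omega_def simp del: transpose_matrix_vector)
qed

lemma continuous_on_mafield: "continuous_on S (mafield alpha beta k)"
  unfolding mafield_def rate_def
  by (intro bounded_linear.continuous_on [OF matrix_vector_mul_bounded_linear] continuous_intros)

lemma mafield_has_zero_in_class:
  fixes alpha beta :: "nat^'m^'n" and W :: "real^'p^'n"
  assumes cons: "\<exists>lam::real^'n. (\<forall>i. lam$i > 0) \<and> lam v* stoich alpha beta = 0"
    and W_span: "span (columns W) = {y. transpose (stoich alpha beta) *v y = 0}"
    and k: "\<forall>j. 0 < k$j" and nonempty: "omega W c0 \<noteq> {}"
  obtains x where "x \<in> omega W c0" "mafield alpha beta k x = 0"
proof -
  obtain lam :: "real^'n" where lam: "\<forall>i. 0 < lam$i" "lam v* stoich alpha beta = 0"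
    using cons by blast
  then have "lam \<in> span (columns W)"
    using W_span by simp
  then have "compact (omega W c0)"
    using lam(1) bounded_omega closed_omega compact_eq_bounded_closed by blast
  then show ?thesis
    by (rule brouwer_zero_of_inward_field [OF _ convex_omega nonempty continuous_on_mafield
          mafield_points_into_omega [OF W_span k]]) (auto intro: that)
qed

theorem theorem2:
  fixes alpha beta :: "nat^'m^'n" and k :: "real^'m" and W :: "real^'p^'n" and c0 :: "real^'p"
  assumes cons: "\<exists>lam::real^'n. (\<forall>i. lam$i > 0) \<and> lam v* stoich alpha beta = 0"
    and W_rank: "rank W = CARD('p)"
    and W_span: "span (columns W) = {y. transpose (stoich alpha beta) *v y = 0}"
    and J_im: "\<And>v x. (\<forall>j. v$j > 0) \<Longrightarrow> (\<forall>i. x$i > 0) \<Longrightarrow>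
                 range (\<lambda>y. Jmat alpha beta v x *v y) = range (\<lambda>y. stoich alpha beta *v y)"
    and k_pos: "\<forall>j. k$j > 0"
    and a_pos: "\<And>v x. (\<forall>j. v$j > 0) \<Longrightarrow> (\<forall>i. x$i > 0) \<Longrightarrow> a_coef alpha beta v x > 0"
    and nonempty: "\<exists>x\<in>omega W c0. \<forall>i. x$i > 0"
    and no_bdry: "\<And>x. x \<in> omega W c0 \<Longrightarrow> (\<exists>i. x$i = 0) \<Longrightarrow> mafield alpha beta k x \<noteq> 0"
  shows "(\<exists>!x. x \<in> omega W c0 \<and> mafield alpha beta k x = 0)
       \<and> (\<forall>x. x \<in> omega W c0 \<and> mafield alpha beta k x = 0 \<longrightarrow> (\<forall>i. x$i > 0))"
proof -
  have positive: "\<forall>i. x$i > 0" if "x \<in> omega W c0" "mafield alpha beta k x = 0" for x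
  proof -
    have "\<forall>i. x$i \<ge> 0" "\<not> (\<exists>i. x$i = 0)"
      using that no_bdry by (auto simp: omega_def)
    then show ?thesis
      by (simp add: less_le)
  qed
  obtain x where x: "x \<in> omega W c0" "mafield alpha beta k x = 0"
    using mafield_has_zero_in_class [OF cons W_span k_pos] nonempty by blast
  have "y = x" if "y \<in> omega W c0 \<and> mafield alpha beta k y = 0" for y
    by (rule mafield_inj_on_positive_class [OF W_span J_im a_pos k_pos])
      (use that x positive in \<open>auto simp: omega_def simp del: transpose_matrix_vector\<close>)
  then show ?thesis
    using x positive by blast
qed

end
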